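(* Let $R$ and $S$ be commutative rings with identity, $f:R\to S$ a ring homomorphism, and $J$ a nonzero proper ideal of $S$. Suppose $R$ is compactly packed. Then for any family $\{\mathfrak{p}_\alpha\}_{\alpha\in\Lambda}$ of prime ideals of $R$, the subset $\{\mathfrak{p}_\alpha^{\prime_f}\}_{\alpha\in\Lambda}$ of $\operatorname{Spec}(R\bowtie^f J)$ is compactly packed.
   Context: $R\bowtie^f J:=\{(r,f(r)+j)\mid r\in R,\ j\in J\}$, a subring of $R\times S$. For a prime ideal $\mathfrak{p}$ of $R$, $\mathfrak{p}^{\prime_f}:=\{(p,f(p)+j)\mid p\in\mathfrak{p},\ j\in J\}$, which is a prime ideal of $R\bowtie^f J$. For a commutative ring $A$, a subset $X\subseteq\operatorname{Spec}(A)$ is compactly packed if whenever an ideal $I$ of $A$ is contained in the union of a family $\{\mathfrak{p}_i\}_i$ of elements of $X$, then $I\subseteq\mathfrak{p}_i$ for some $i$; $A$ is compactly packed if $\operatorname{Spec}(A)$ is compactly packed. *)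

theory Defs
  imports "HOL-Algebra.Algebra"
begin

definition amalgamation ::
  "('a, 'm) ring_scheme \<Rightarrow> ('b, 'n) ring_scheme \<Rightarrow> ('a \<Rightarrow> 'b) \<Rightarrow> 'b set \<Rightarrow> ('a \<times> 'b) ring"
  where "amalgamation R S f J =
    (RDirProd R S)\<lparr>carrier := {(r, f r \<oplus>\<^bsub>S\<^esub> j) | r j. r \<in> carrier R \<and> j \<in> J}\<rparr>"

definition amalg_prime ::
  "('b, 'n) ring_scheme \<Rightarrow> ('a \<Rightarrow> 'b) \<Rightarrow> 'b set \<Rightarrow> 'a set \<Rightarrow> ('a \<times> 'b) set"
  where "amalg_prime S f J P = {(p, f p \<oplus>\<^bsub>S\<^esub> j) | p j. p \<in> P \<and> j \<in> J}"

definition Spec :: "('a, 'm) ring_scheme \<Rightarrow> 'a set set"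
  where "Spec A = {P. primeideal P A}"

definition compactly_packed_subset :: "('a, 'm) ring_scheme \<Rightarrow> 'a set set \<Rightarrow> bool"
  where "compactly_packed_subset A Xs \<longleftrightarrow>
    Xs \<subseteq> Spec A \<and>
    (\<forall>I Fam. ideal I A \<longrightarrow> Fam \<subseteq> Xs \<longrightarrow> I \<subseteq> Union Fam \<longrightarrow> (\<exists>Q\<in>Fam. I \<subseteq> Q))"

definition compactly_packed :: "('a, 'm) ring_scheme \<Rightarrow> bool"
  where "compactly_packed A \<longleftrightarrow> compactly_packed_subset A (Spec A)"

end

theory Submission
  imports Defs
begin

(* The first projection fst is a surjective ring homomorphism from the amalgamation onto R,
   and the ideal p'^f is exactly the preimage of p under it.  Along a surjective homomorphism
   images of ideals are ideals, so a covering of an ideal I of the amalgamation by preimages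
   of primes is mapped to a covering of the ideal fst ` I of R by the primes themselves; as R
   is compactly packed, one of these primes contains fst ` I, and its preimage contains I. *)

lemma (in ring_hom_ring) img_is_ideal:
  assumes I: "ideal I R" and surj: "h ` carrier R = carrier S"
  shows "ideal (h ` I) S"
proof -
  interpret I: ideal I R by fact
  have closed: "x \<otimes>\<^bsub>S\<^esub> a \<in> h ` I" "a \<otimes>\<^bsub>S\<^esub> x \<in> h ` I"
    if a: "a \<in> h ` I" and x: "x \<in> carrier S" for a x
  proof -
    obtain i where i: "i \<in> I" "a = h i" using a by blast
    obtain y where y: "y \<in> carrier R" "x = h y" using x unfolding surj[symmetric] by blast
    have "x \<otimes>\<^bsub>S\<^esub> a = h (y \<otimes> i)" "a \<otimes>\<^bsub>S\<^esub> x = h (i \<otimes> y)"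
      using i y I.Icarr by simp_all
    moreover have "y \<otimes> i \<in> I" "i \<otimes> y \<in> I"
      using i y I.I_l_closed I.I_r_closed by simp_all
    ultimately show "x \<otimes>\<^bsub>S\<^esub> a \<in> h ` I" "a \<otimes>\<^bsub>S\<^esub> x \<in> h ` I" by auto
  qed
  show ?thesis
    by (rule idealI[OF S.ring_axioms img_is_add_subgroup[OF I.a_subgroup]]) (fact closed)+
qed

lemma compactly_packed_subset_subset:
  "compactly_packed_subset A Ys \<Longrightarrow> Xs \<subseteq> Ys \<Longrightarrow> compactly_packed_subset A Xs"
  unfolding compactly_packed_subset_def by (meson subset_trans)

lemma (in ring_hom_ring) compactly_packed_subset_vimage:
  assumes "cring R" and surj: "h ` carrier R = carrier S"
    and packed: "compactly_packed_subset S Xs"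
  shows "compactly_packed_subset R ((\<lambda>P. {r \<in> carrier R. h r \<in> P}) ` Xs)"
  unfolding compactly_packed_subset_def
proof (intro conjI allI impI)
  have "Xs \<subseteq> Spec S" using packed unfolding compactly_packed_subset_def by blast
  then show "(\<lambda>P. {r \<in> carrier R. h r \<in> P}) ` Xs \<subseteq> Spec R"
    using primeideal_vimage[OF \<open>cring R\<close>] unfolding Spec_def by auto
next
  fix I Fam
  assume I: "ideal I R" and Fam: "Fam \<subseteq> (\<lambda>P. {r \<in> carrier R. h r \<in> P}) ` Xs"
    and cover: "I \<subseteq> \<Union> Fam"
  define Fam' where "Fam' = {P \<in> Xs. {r \<in> carrier R. h r \<in> P} \<in> Fam}"
  have "h ` I \<subseteq> \<Union> Fam'"
  proof
    fix y assume "y \<in> h ` I"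
    then obtain i where i: "i \<in> I" "y = h i" by blast
    then obtain Q where "Q \<in> Fam" "i \<in> Q" using cover by blast
    moreover obtain P where "P \<in> Xs" "Q = {r \<in> carrier R. h r \<in> P}"
      using \<open>Q \<in> Fam\<close> Fam by blast
    ultimately show "y \<in> \<Union> Fam'" unfolding Fam'_def using i by blast
  qed
  moreover have "Fam' \<subseteq> Xs" unfolding Fam'_def by blast
  ultimately obtain P where P: "P \<in> Fam'" "h ` I \<subseteq> P"
    using packed img_is_ideal[OF I surj] unfolding compactly_packed_subset_def by blast
  have "I \<subseteq> {r \<in> carrier R. h r \<in> P}"
    using P(2) ideal.Icarr[OF I] by blast
  then show "\<exists>Q\<in>Fam. I \<subseteq> Q" using P(1) unfolding Fam'_def by blast
qed

lemma RDirProd_simps: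
  "(a, b) \<otimes>\<^bsub>RDirProd R S\<^esub> (c, d) = (a \<otimes>\<^bsub>R\<^esub> c, b \<otimes>\<^bsub>S\<^esub> d)"
  "(a, b) \<oplus>\<^bsub>RDirProd R S\<^esub> (c, d) = (a \<oplus>\<^bsub>R\<^esub> c, b \<oplus>\<^bsub>S\<^esub> d)"
  "\<one>\<^bsub>RDirProd R S\<^esub> = (\<one>\<^bsub>R\<^esub>, \<one>\<^bsub>S\<^esub>)"
  "\<zero>\<^bsub>RDirProd R S\<^esub> = (\<zero>\<^bsub>R\<^esub>, \<zero>\<^bsub>S\<^esub>)"
  by (simp_all add: RDirProd_def DirProd_def monoid.defs)

lemma RDirProd_a_inv:
  assumes "ring R" "ring S" "a \<in> carrier R" "b \<in> carrier S"
  shows "\<ominus>\<^bsub>RDirProd R S\<^esub> (a, b) = (\<ominus>\<^bsub>R\<^esub> a, \<ominus>\<^bsub>S\<^esub> b)"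
proof -
  interpret R: ring R by fact
  interpret S: ring S by fact
  interpret RS: ring "RDirProd R S" using RDirProd_ring assms(1,2) .
  show ?thesis
    using assms(3,4)
    by (intro RS.minus_equality) (simp_all add: RDirProd_simps RDirProd_carrier R.l_neg S.l_neg)
qed

lemma amalgamation_carrier:
  "carrier (amalgamation R S f J) = {(r, f r \<oplus>\<^bsub>S\<^esub> j) | r j. r \<in> carrier R \<and> j \<in> J}"
  by (simp add: amalgamation_def)

lemma amalgamation_memI:
  "r \<in> carrier R \<Longrightarrow> j \<in> J \<Longrightarrow> (r, f r \<oplus>\<^bsub>S\<^esub> j) \<in> carrier (amalgamation R S f J)"
  by (auto simp: amalgamation_carrier)

lemma amalgamation_memE:
  assumes "x \<in> carrier (amalgamation R S f J)"
  obtains r j where "x = (r, f r \<oplus>\<^bsub>S\<^esub> j)" "r \<in> carrier R" "j \<in> J"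
  using assms by (auto simp: amalgamation_carrier)

context
  fixes R :: "('a, 'm) ring_scheme" and S :: "('b, 'n) ring_scheme"
    and f :: "'a \<Rightarrow> 'b" and J :: "'b set"
  assumes R: "cring R" and S: "cring S" and f: "f \<in> ring_hom R S" and J: "ideal J S"
begin

interpretation R: cring R by (fact R)
interpretation S: cring S by (fact S)
interpretation J: ideal J S by (fact J)
interpretation f: ring_hom_ring R S f
  using ring_hom_ringI2[OF R.ring_axioms S.ring_axioms f] .
interpretation RS: ring "RDirProd R S"
  using RDirProd_ring R.ring_axioms S.ring_axioms .

lemma amalgamation_subset: "carrier (amalgamation R S f J) \<subseteq> carrier R \<times> carrier S"
  using J.Icarr by (auto simp: amalgamation_carrier)

lemma amalgamation_a_inv_closed:
  assumes "x \<in> carrier (amalgamation R S f J)"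
  shows "\<ominus>\<^bsub>RDirProd R S\<^esub> x \<in> carrier (amalgamation R S f J)"
proof -
  obtain r j where x: "x = (r, f r \<oplus>\<^bsub>S\<^esub> j)" "r \<in> carrier R" "j \<in> J"
    using assms by (rule amalgamation_memE)
  then have "\<ominus>\<^bsub>RDirProd R S\<^esub> x = (\<ominus>\<^bsub>R\<^esub> r, f (\<ominus>\<^bsub>R\<^esub> r) \<oplus>\<^bsub>S\<^esub> \<ominus>\<^bsub>S\<^esub> j)"
    using J.Icarr by (simp add: RDirProd_a_inv R.ring_axioms S.ring_axioms S.minus_add)
  also have "\<dots> \<in> carrier (amalgamation R S f J)"
    using x by (intro amalgamation_memI) (simp_all add: J.a_inv_closed)
  finally show ?thesis .
qed

lemma amalgamation_add_closed:
  assumes "x \<in> carrier (amalgamation R S f J)" and "y \<in> carrier (amalgamation R S f J)"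
  shows "x \<oplus>\<^bsub>RDirProd R S\<^esub> y \<in> carrier (amalgamation R S f J)"
proof -
  obtain r j s k where x: "x = (r, f r \<oplus>\<^bsub>S\<^esub> j)" "r \<in> carrier R" "j \<in> J"
    and y: "y = (s, f s \<oplus>\<^bsub>S\<^esub> k)" "s \<in> carrier R" "k \<in> J"
    using assms by (metis amalgamation_memE)
  then have "x \<oplus>\<^bsub>RDirProd R S\<^esub> y = (r \<oplus>\<^bsub>R\<^esub> s, f (r \<oplus>\<^bsub>R\<^esub> s) \<oplus>\<^bsub>S\<^esub> (j \<oplus>\<^bsub>S\<^esub> k))"
    using J.Icarr by (simp add: RDirProd_simps S.a_ac)
  also have "\<dots> \<in> carrier (amalgamation R S f J)"
    using x y by (intro amalgamation_memI) (simp_all add: J.a_closed)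
  finally show ?thesis .
qed

lemma amalgamation_mult_closed:
  assumes "x \<in> carrier (amalgamation R S f J)" and "y \<in> carrier (amalgamation R S f J)"
  shows "x \<otimes>\<^bsub>RDirProd R S\<^esub> y \<in> carrier (amalgamation R S f J)"
proof -
  obtain r j s k where x: "x = (r, f r \<oplus>\<^bsub>S\<^esub> j)" "r \<in> carrier R" "j \<in> J"
    and y: "y = (s, f s \<oplus>\<^bsub>S\<^esub> k)" "s \<in> carrier R" "k \<in> J"
    using assms by (metis amalgamation_memE)
  then have "x \<otimes>\<^bsub>RDirProd R S\<^esub> y = (r \<otimes>\<^bsub>R\<^esub> s,
      f (r \<otimes>\<^bsub>R\<^esub> s) \<oplus>\<^bsub>S\<^esub> (j \<otimes>\<^bsub>S\<^esub> (f s \<oplus>\<^bsub>S\<^esub> k) \<oplus>\<^bsub>S\<^esub> f r \<otimes>\<^bsub>S\<^esub> k))"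
    using J.Icarr by (simp add: RDirProd_simps S.l_distr S.r_distr S.a_ac)
  also have "\<dots> \<in> carrier (amalgamation R S f J)"
    using x y J.Icarr by (intro amalgamation_memI) (simp_all add: J.a_closed J.I_l_closed J.I_r_closed)
  finally show ?thesis .
qed

lemma subcring_amalgamation: "subcring (carrier (amalgamation R S f J)) (RDirProd R S)"
proof (intro RS.subcringI RS.subringI)
  show "carrier (amalgamation R S f J) \<subseteq> carrier (RDirProd R S)"
    using amalgamation_subset by (simp add: RDirProd_carrier)
  have "\<one>\<^bsub>RDirProd R S\<^esub> = (\<one>\<^bsub>R\<^esub>, f \<one>\<^bsub>R\<^esub> \<oplus>\<^bsub>S\<^esub> \<zero>\<^bsub>S\<^esub>)"
    by (simp add: RDirProd_simps)
  also have "\<dots> \<in> carrier (amalgamation R S f J)"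
    by (intro amalgamation_memI R.one_closed J.zero_closed)
  finally show "\<one>\<^bsub>RDirProd R S\<^esub> \<in> carrier (amalgamation R S f J)" .
next
  fix x y
  assume xy: "x \<in> carrier (amalgamation R S f J)" "y \<in> carrier (amalgamation R S f J)"
  obtain a b c d where "x = (a, b)" "y = (c, d)" by fastforce
  moreover have "x \<in> carrier R \<times> carrier S" "y \<in> carrier R \<times> carrier S"
    using xy amalgamation_subset by auto
  ultimately show "x \<otimes>\<^bsub>RDirProd R S\<^esub> y = y \<otimes>\<^bsub>RDirProd R S\<^esub> x"
    by (simp add: RDirProd_simps R.m_comm S.m_comm)
qed (simp_all add: amalgamation_a_inv_closed amalgamation_add_closed amalgamation_mult_closed)

lemma cring_amalgamation: "cring (amalgamation R S f J)"
proof -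
  have "amalgamation R S f J = (RDirProd R S)\<lparr>carrier := carrier (amalgamation R S f J)\<rparr>"
    by (simp add: amalgamation_def)
  then show ?thesis
    using RS.subcring_iff[OF subcringE(1)] subcring_amalgamation by metis
qed

lemma ring_hom_ring_amalgamation_fst: "ring_hom_ring (amalgamation R S f J) R fst"
proof (rule ring_hom_ringI2)
  show "ring (amalgamation R S f J)" using cring_amalgamation cring.axioms(1) by blast
  show "fst \<in> ring_hom (amalgamation R S f J) R"
    by (rule ring_hom_memI) (auto simp: amalgamation_def RDirProd_simps)
qed (rule R.ring_axioms)

end

lemma fst_image_carrier_amalgamation:
  assumes "ideal J S"
  shows "fst ` carrier (amalgamation R S f J) = carrier R"
proof -
  have "r \<in> fst ` carrier (amalgamation R S f J)" if "r \<in> carrier R" for r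
    using that additive_subgroup.zero_closed[OF ideal.axioms(1)[OF assms]]
    by (force simp: amalgamation_carrier)
  then show ?thesis by (auto simp: amalgamation_carrier)
qed

lemma amalg_prime_eq_vimage:
  assumes "P \<subseteq> carrier R"
  shows "amalg_prime S f J P = {x \<in> carrier (amalgamation R S f J). fst x \<in> P}"
  using assms unfolding amalg_prime_def amalgamation_carrier by auto

theorem proposition4p3:
  fixes R :: "('a, 'm) ring_scheme" and S :: "('b, 'n) ring_scheme"
    and f :: "'a \<Rightarrow> 'b" and J :: "'b set"
    and \<Lambda> :: "'i set" and p :: "'i \<Rightarrow> 'a set"
  assumes "cring R" and "cring S"
    and "f \<in> ring_hom R S"
    and "ideal J S" and "J \<noteq> {\<zero>\<^bsub>S\<^esub>}" and "J \<noteq> carrier S"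
    and "compactly_packed R"
    and "\<And>\<alpha>. \<alpha> \<in> \<Lambda> \<Longrightarrow> primeideal (p \<alpha>) R"
  shows "compactly_packed_subset (amalgamation R S f J)
           ((\<lambda>\<alpha>. amalg_prime S f J (p \<alpha>)) ` \<Lambda>)"
proof -
  let ?A = "amalgamation R S f J"
  let ?vimage = "\<lambda>P. {x \<in> carrier ?A. fst x \<in> P}"
  interpret fst: ring_hom_ring ?A R fst
    using ring_hom_ring_amalgamation_fst[OF assms(1-4)] .
  have "compactly_packed_subset R (p ` \<Lambda>)"
    using assms(7,8) compactly_packed_subset_subset
    unfolding compactly_packed_def Spec_def by blast
  then have "compactly_packed_subset ?A (?vimage ` p ` \<Lambda>)"
    by (rule fst.compactly_packed_subset_vimage[OF cring_amalgamation[OF assms(1-4)]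
          fst_image_carrier_amalgamation[OF assms(4)]])
  moreover have "amalg_prime S f J (p \<alpha>) = ?vimage (p \<alpha>)" if "\<alpha> \<in> \<Lambda>" for \<alpha>
  proof -
    have "p \<alpha> \<subseteq> carrier R"
      using ideal.Icarr[OF primeideal.axioms(1)[OF assms(8)[OF that]]] by blast
    then show ?thesis by (rule amalg_prime_eq_vimage)
  qed
  ultimately show ?thesis
    by (simp add: image_image cong: image_cong)
qed

end
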